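(* Let $\mathfrak{S}$ be a labelled sequent. Any saturation phase started on $\mathfrak{S}$ terminates and yields a finite derivation (with root $\mathfrak{S}$) whose open leaves are saturated.
   Context: Formulas: fix a countable set $\mathtt{Prop}$ of propositional atoms; formulas are generated by $A ::= \bot \mid p \mid A \to A \mid \Box A \mid \triangle A$ with $p \in \mathtt{Prop}$. Labelled sequents: fix a countable set $\mathtt{Lab}$ of labels. A labelled formula is $x:A$ with $x\in\mathtt{Lab}$ and $A$ a formula; a relational atom is $xRy$ or $xSy$ with $x,y \in \mathtt{Lab}$. A sequent $\mathcal{R},\Gamma\Rightarrow\Omega$ consists of a finite multiset $\mathcal{R}$ of relational atoms and finite multisets $\Gamma,\Omega$ of labelled formulas; commas denote multiset union. Rules used (premisses above, conclusion below; $\mathcal{R},\Gamma,\Omega$ arbitrary): ($\to$R) from $\mathcal{R},\Gamma,x:A\Rightarrow x:B,\Omega$ infer $\mathcal{R},\Gamma\Rightarrow x:A\to B,\Omega$; ($\to$L) from $\mathcal{R},\Gamma\Rightarrow x:A,\Omega$ and $\mathcal{R},\Gamma,x:B\Rightarrow\Omega$ infer $\mathcal{R},\Gamma,x:A\to B\Rightarrow\Omega$; ($\Box$L) from $\mathcal{R},xRy,x:\Box A,y:A,\Gamma\Rightarrow\Omega$ infer $\mathcal{R},xRy,x:\Box A,\Gamma\Rightarrow\Omega$; ($\triangle$L) from $\mathcal{R},xSy,x:\triangle A,y:A,\Gamma\Rightarrow\Omega$ infer $\mathcal{R},xSy,x:\triangle A,\Gamma\Rightarrow\Omega$; ($\mathrm{trans}_{\circ\bullet}$,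 for each $\circ,\bullet\in\{R,S\}$) from $\mathcal{R},x\circ y,y\bullet z,x\bullet z,\Gamma\Rightarrow\Omega$ infer $\mathcal{R},x\circ y,y\bullet z,\Gamma\Rightarrow\Omega$. A derivation is a (finite or infinite) tree of sequents built from rule instances, possibly with open leaves (leaves that are not conclusions of premiss-free rules). Saturation: in a sequent $\mathcal{R},\Gamma\Rightarrow\Omega$ containing $x:A$, the labelled formula $x:A$ is saturated if: $A\in\mathtt{Prop}$ or $A=\bot$; or $A=A_1\to A_2$ and [if $x:A\in\Gamma$ then $x:A_1\in\Omega$ or $x:A_2\in\Gamma$] and [if $x:A\in\Omega$ then $x:A_1\in\Gamma$ and $x:A_2\in\Omega$]; or $A=\Box A_1$ and if $x:A\in\Gamma$ then $y:A_1\in\Gamma$ for all $y$ with $xRy\in\mathcal{R}$; or $A=\triangle A_1$ and if $x:A\in\Gamma$ then $y:A_1\in\Gamma$ for all $y$ with $xSy\in\mathcal{R}$. A sequent is saturated if all its labelled formulas are saturated and $\mathcal{R}$ is closed under the transitivity rules (whenever $x\circ y,y\bullet z\in\mathcal{R}$ with $\circ,\bullet\in\{R,S\}$, also $x\bullet z\in\mathcal{R}$). Saturation phase: starting from a sequent (or from the open leaves of a derivation), repeatedly apply, bottom-up, the rules $\to$L, $\to$R, $\Box$L, $\triangle$L and $\mathrm{trans}_{\circ\bullet}$ to open leaves that are not saturated, in any order, each application addressing a formula or pair of relational atoms that is not yet saturated in that leaf, for as long as possible. *)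

theory Defs
  imports Main "HOL-Library.Multiset"
begin

datatype formula = Bot | Atom nat | Imp formula formula | Box formula | Tri formula

type_synonym label = nat

text \<open>Kinds of relational atoms: RR stands for xRy, SS for xSy.\<close>
datatype rk = RR | SS

type_synonym relatom = "rk \<times> label \<times> label"
type_synonym lformula = "label \<times> formula"

type_synonym sequent = "relatom multiset \<times> lformula multiset \<times> lformula multiset"

fun lf_saturated :: "sequent \<Rightarrow> lformula \<Rightarrow> bool" where
  "lf_saturated (Rl, G, D) (x, Bot) = True"
| "lf_saturated (Rl, G, D) (x, Atom p) = True"
| "lf_saturated (Rl, G, D) (x, Imp A1 A2) =
     (((x, Imp A1 A2) \<in># G \<longrightarrow> (x, A1) \<in># D \<or> (x, A2) \<in># G) \<and>
      ((x, Imp A1 A2) \<in># D \<longrightarrow> (x, A1) \<in># G \<and> (x, A2) \<in># D))"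
| "lf_saturated (Rl, G, D) (x, Box A1) =
     ((x, Box A1) \<in># G \<longrightarrow> (\<forall>y. (RR, x, y) \<in># Rl \<longrightarrow> (y, A1) \<in># G))"
| "lf_saturated (Rl, G, D) (x, Tri A1) =
     ((x, Tri A1) \<in># G \<longrightarrow> (\<forall>y. (SS, x, y) \<in># Rl \<longrightarrow> (y, A1) \<in># G))"

definition trans_closed :: "relatom multiset \<Rightarrow> bool" where
  "trans_closed Rl \<longleftrightarrow>
     (\<forall>c d x y z. (c, x, y) \<in># Rl \<and> (d, y, z) \<in># Rl \<longrightarrow> (d, x, z) \<in># Rl)"

definition saturated :: "sequent \<Rightarrow> bool" where
  "saturated s \<longleftrightarrow>
     (case s of (Rl, G, D) \<Rightarrow>
        (\<forall>lf \<in># G + D. lf_saturated s lf) \<and> trans_closed Rl)"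

datatype rapp =
    RImpL label formula formula
  | RImpR label formula formula
  | RBoxL label label formula
  | RTriL label label formula
  | RTrans rk rk label label label   \<comment> \<open>trans_{c d} with x c y, y d z, adding x d z\<close>

inductive rule_inst :: "rapp \<Rightarrow> sequent list \<Rightarrow> sequent \<Rightarrow> bool" where
  impL: "rule_inst (RImpL x A B)
           [(Rl, G, add_mset (x, A) D), (Rl, add_mset (x, B) G, D)]
           (Rl, add_mset (x, Imp A B) G, D)"
| impR: "rule_inst (RImpR x A B)
           [(Rl, add_mset (x, A) G, add_mset (x, B) D)]
           (Rl, G, add_mset (x, Imp A B) D)"
| boxL: "rule_inst (RBoxL x y A)
           [(add_mset (RR, x, y) Rl, add_mset (x, Box A) (add_mset (y, A) G), D)]
           (add_mset (RR, x, y) Rl, add_mset (x, Box A) G, D)"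
| triL: "rule_inst (RTriL x y A)
           [(add_mset (SS, x, y) Rl, add_mset (x, Tri A) (add_mset (y, A) G), D)]
           (add_mset (SS, x, y) Rl, add_mset (x, Tri A) G, D)"
| trans: "rule_inst (RTrans c d x y z)
           [(add_mset (c, x, y) (add_mset (d, y, z) (add_mset (d, x, z) Rl)), G, D)]
           (add_mset (c, x, y) (add_mset (d, y, z) Rl), G, D)"

fun addresses_unsat :: "rapp \<Rightarrow> sequent \<Rightarrow> bool" where
  "addresses_unsat (RImpL x A B) (Rl, G, D) = (\<not> ((x, A) \<in># D \<or> (x, B) \<in># G))"
| "addresses_unsat (RImpR x A B) (Rl, G, D) = (\<not> ((x, A) \<in># G \<and> (x, B) \<in># D))"
| "addresses_unsat (RBoxL x y A) (Rl, G, D) = ((y, A) \<notin># G)"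
| "addresses_unsat (RTriL x y A) (Rl, G, D) = ((y, A) \<notin># G)"
| "addresses_unsat (RTrans c d x y z) (Rl, G, D) = ((d, x, z) \<notin># Rl)"

text \<open>Finite derivation trees; Leaf s is an open leaf (no rule here is premiss-free).\<close>
datatype dtree = Leaf sequent | Node sequent rapp "dtree list"

fun root :: "dtree \<Rightarrow> sequent" where
  "root (Leaf s) = s"
| "root (Node s r ts) = s"

fun open_leaves :: "dtree \<Rightarrow> sequent list" where
  "open_leaves (Leaf s) = [s]"
| "open_leaves (Node s r ts) = concat (map open_leaves ts)"

fun is_derivation :: "dtree \<Rightarrow> bool" where
  "is_derivation (Leaf s) = True"
| "is_derivation (Node s r ts) =
     (rule_inst r (map root ts) s \<and> (\<forall>t \<in> set ts. is_derivation t))"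

inductive sat_step :: "dtree \<Rightarrow> dtree \<Rightarrow> bool" where
  expand: "\<not> saturated s \<Longrightarrow> rule_inst r ps s \<Longrightarrow> addresses_unsat r s \<Longrightarrow>
           sat_step (Leaf s) (Node s r (map Leaf ps))"
| inside: "sat_step t t' \<Longrightarrow>
           sat_step (Node s r (ts1 @ t # ts2)) (Node s r (ts1 @ t' # ts2))"

end

theory Submission
  imports Defs
begin

(* Every sequent reached from S uses only labels of S and subformulas of formulas of S. On such
  sequents each rule application (addressing a non-saturated formula or pair of relational atoms)
  decreases a well-founded measure, so the multiset of open leaves decreases in the multiset
  extension and the phase terminates; and a non-saturated leaf always admits such a rule, so a
  final tree has only saturated leaves.
  The measure compares first the number of missing relational atoms over the labels of S, which
  only the transitivity rules change, and then the set of unmet demands: the saturation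
  conditions, instantiated to labels and subformulas of S, with heavier demands counting as
  smaller. The rule meets the demand it addresses. Only the implication rules can break demands,
  since they delete their principal formula x:A\<rightarrow>B; the demands they break depend on
  x:A\<rightarrow>B and are weighted to be heavier than the demand on x:A\<rightarrow>B that the rule meets. *)

fun subformulas :: "formula \<Rightarrow> formula set" where
  "subformulas Bot = {Bot}"
| "subformulas (Atom p) = {Atom p}"
| "subformulas (Imp A B) = insert (Imp A B) (subformulas A \<union> subformulas B)"
| "subformulas (Box A) = insert (Box A) (subformulas A)"
| "subformulas (Tri A) = insert (Tri A) (subformulas A)"

lemma finite_subformulas: "finite (subformulas F)"
  by (induction F) auto

lemma subformulas_refl: "F \<in> subformulas F"
  by (cases F) auto

fun sequent_within :: "label set \<Rightarrow> formula set \<Rightarrow> sequent \<Rightarrow> bool" where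
  "sequent_within L Sb (Rl, G, D) \<longleftrightarrow>
     (\<forall>(k, x, y) \<in># Rl. x \<in> L \<and> y \<in> L) \<and> (\<forall>(x, F) \<in># G + D. x \<in> L \<and> subformulas F \<subseteq> Sb)"

fun sequent_labels :: "sequent \<Rightarrow> label set" where
  "sequent_labels (Rl, G, D) =
     fst ` set_mset (G + D) \<union> (fst \<circ> snd) ` set_mset Rl \<union> (snd \<circ> snd) ` set_mset Rl"

fun sequent_subformulas :: "sequent \<Rightarrow> formula set" where
  "sequent_subformulas (Rl, G, D) = (\<Union>(x, F) \<in> set_mset (G + D). subformulas F)"

lemma finite_sequent_labels: "finite (sequent_labels s)"
  by (cases s) simp

lemma finite_sequent_subformulas: "finite (sequent_subformulas s)"
  by (cases s) (auto simp: finite_subformulas)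

lemma sequent_within_labels_subformulas: "sequent_within (sequent_labels s) (sequent_subformulas s) s"
proof -
  obtain Rl G D where s: "s = (Rl, G, D)"
    by (cases s)
  have "\<forall>(k, x, y) \<in># Rl. x \<in> sequent_labels s \<and> y \<in> sequent_labels s"
  proof clarify
    fix k x y
    assume "(k, x, y) \<in># Rl"
    then have "x \<in> (fst \<circ> snd) ` set_mset Rl" "y \<in> (snd \<circ> snd) ` set_mset Rl"
      by (force intro: rev_image_eqI)+
    then show "x \<in> sequent_labels s \<and> y \<in> sequent_labels s"
      by (simp add: s)
  qed
  moreover have "\<forall>(x, F) \<in># G + D. x \<in> sequent_labels s \<and> subformulas F \<subseteq> sequent_subformulas s"
  proof clarify
    fix x F
    assume xF: "(x, F) \<in># G + D"
    then have "x \<in> fst ` set_mset (G + D)"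
      by (force intro: rev_image_eqI)
    with xF show "x \<in> sequent_labels s \<and> subformulas F \<subseteq> sequent_subformulas s"
      by (auto simp: s)
  qed
  ultimately show ?thesis
    unfolding s by simp
qed

datatype demand_kind = Imp_Left | Imp_Right | In_Antecedent

instance demand_kind :: finite
proof
  have "UNIV = {Imp_Left, Imp_Right, In_Antecedent}"
    using demand_kind.exhaust by auto
  then show "finite (UNIV :: demand_kind set)"
    by (metis finite.emptyI finite_insert)
qed

(* Demands do not refer to their principal formula, which the implication rules delete;
  (y, A, In_Antecedent) is the demand y:A that the rules \<box>L and \<triangle>L meet. *)
type_synonym demand = "label \<times> formula \<times> demand_kind"

fun meets :: "lformula multiset \<Rightarrow> lformula multiset \<Rightarrow> demand \<Rightarrow> bool" where
  "meets G D (x, Imp A B, Imp_Left) \<longleftrightarrow> (x, A) \<in># D \<or> (x, B) \<in># G"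
| "meets G D (x, Imp A B, Imp_Right) \<longleftrightarrow> (x, A) \<in># G \<and> (x, B) \<in># D"
| "meets G D (x, F, In_Antecedent) \<longleftrightarrow> (x, F) \<in># G"
| "meets G D (x, F, k) \<longleftrightarrow> True"

(* An In_Antecedent demand on x:A\<rightarrow>B must be heavier than the implication demands on it,
  because \<rightarrow>L deletes x:A\<rightarrow>B from the antecedent. *)
fun demand_weight :: "demand \<Rightarrow> nat" where
  "demand_weight (x, F, In_Antecedent) = Suc (size F)"
| "demand_weight (x, F, k) = size F"

lemma demand_weight_le: "demand_weight (x, F, k) \<le> Suc (size F)"
  by (cases k) auto

lemma meets_if_lighter_formulas_kept:
  assumes "meets G D d"
    and "\<forall>lf. size (snd lf) < demand_weight d \<longrightarrow> (lf \<in># G \<longrightarrow> lf \<in># G') \<and> (lf \<in># D \<longrightarrow> lf \<in># D')"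
  shows "meets G' D' d"
proof -
  obtain x F k where "d = (x, F, k)"
    by (cases d) auto
  with assms show ?thesis
    by (cases F; cases k) (auto 0 3 dest: spec[of _ "(x, _)"])
qed


instance rk :: finite
proof
  have "UNIV = {RR, SS}"
    using rk.exhaust by auto
  then show "finite (UNIV :: rk set)"
    by (metis finite.emptyI finite_insert)
qed

definition unmet_demands :: "label set \<Rightarrow> formula set \<Rightarrow> lformula multiset \<Rightarrow> lformula multiset \<Rightarrow> demand set" where
  "unmet_demands L Sb G D = {d \<in> L \<times> Sb \<times> UNIV. \<not> meets G D d}"

definition missing_relatoms :: "label set \<Rightarrow> relatom multiset \<Rightarrow> nat" where
  "missing_relatoms L Rl = card (UNIV \<times> L \<times> L - set_mset Rl)"

definition heavier :: "nat \<Rightarrow> (demand \<times> demand) set" where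
  "heavier N = {(d, d'). demand_weight d' < demand_weight d \<and> demand_weight d \<le> N}"

definition sequent_less :: "label set \<Rightarrow> formula set \<Rightarrow> nat \<Rightarrow> (sequent \<times> sequent) set" where
  "sequent_less L Sb N = inv_image (less_than <*lex*> mult (heavier N))
     (\<lambda>(Rl, G, D). (missing_relatoms L Rl, mset_set (unmet_demands L Sb G D)))"

lemma wf_heavier: "wf (heavier N)"
  by (rule wf_subset[OF wf_measure[of "\<lambda>d. N - demand_weight d"]]) (auto simp: heavier_def)

lemma wf_sequent_less: "wf (sequent_less L Sb N)"
  unfolding sequent_less_def
  by (intro wf_inv_image wf_lex_prod wf_less_than wf_mult wf_heavier)

lemma mset_set_mult:
  assumes "finite A" "finite B" "a \<in> A - B" "\<forall>b \<in> B - A. (b, a) \<in> r"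
  shows "(mset_set B, mset_set A) \<in> mult r"
proof -
  have "(A \<inter> B) \<union> (A - B) = A" "(A \<inter> B) \<union> (B - A) = B"
    "(A \<inter> B) \<inter> (A - B) = {}" "(A \<inter> B) \<inter> (B - A) = {}"
    by blast+
  then have "mset_set A = mset_set (A \<inter> B) + mset_set (A - B)"
    "mset_set B = mset_set (A \<inter> B) + mset_set (B - A)"
    using mset_set_Union[of "A \<inter> B" "A - B"] mset_set_Union[of "A \<inter> B" "B - A"] assms(1,2)
    by simp_all
  moreover have "mset_set (A - B) \<noteq> {#}"
    using assms(1,3) by (simp add: mset_set_empty_iff) blast
  ultimately show ?thesis
    using assms one_step_implies_mult[of "mset_set (A - B)" "mset_set (B - A)" r "mset_set (A \<inter> B)"]
    by auto
qed

lemma unmet_demands_decrease: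
  assumes "finite L" "finite Sb" "\<forall>F \<in> Sb. size F < N"
    and d: "d \<in> unmet_demands L Sb G D" "meets G' D' d"
    and lost: "\<forall>lf. lf \<in># G \<and> lf \<notin># G' \<or> lf \<in># D \<and> lf \<notin># D' \<longrightarrow> demand_weight d \<le> size (snd lf)"
  shows "(mset_set (unmet_demands L Sb G' D'), mset_set (unmet_demands L Sb G D)) \<in> mult (heavier N)"
proof (rule mset_set_mult)
  show "finite (unmet_demands L Sb G D)" "finite (unmet_demands L Sb G' D')"
    using assms(1,2) by (auto simp: unmet_demands_def intro: finite_subset[of _ "L \<times> Sb \<times> UNIV"])
  show "d \<in> unmet_demands L Sb G D - unmet_demands L Sb G' D'"
    using d by (simp add: unmet_demands_def)
  show "\<forall>b \<in> unmet_demands L Sb G' D' - unmet_demands L Sb G D. (b, d) \<in> heavier N"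
  proof
    fix b
    assume b: "b \<in> unmet_demands L Sb G' D' - unmet_demands L Sb G D"
    then obtain x F k where bxFk: "b = (x, F, k)" "F \<in> Sb" "meets G D b" "\<not> meets G' D' b"
      by (auto simp: unmet_demands_def)
    then have "demand_weight d < demand_weight b"
      using meets_if_lighter_formulas_kept[of G D b G' D'] lost by force
    moreover have "demand_weight b \<le> N"
      using bxFk(1,2) assms(3) demand_weight_le[of x F k] by fastforce
    ultimately show "(b, d) \<in> heavier N"
      by (simp add: heavier_def)
  qed
qed

lemma sequent_less_by_demands:
  assumes "(mset_set (unmet_demands L Sb G' D'), mset_set (unmet_demands L Sb G D)) \<in> mult (heavier N)"
  shows "((Rl, G', D'), (Rl, G, D)) \<in> sequent_less L Sb N"
  using assms by (simp add: sequent_less_def)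

lemma sequent_less_by_relatoms:
  assumes "finite L" "set_mset Rl \<subseteq> set_mset Rl'" "(k, x, z) \<in># Rl'" "(k, x, z) \<notin># Rl" "x \<in> L" "z \<in> L"
  shows "((Rl', G, D), (Rl, G, D)) \<in> sequent_less L Sb N"
proof -
  have "UNIV \<times> L \<times> L - set_mset Rl' \<subset> UNIV \<times> L \<times> L - set_mset Rl"
    using assms(2-6) by blast
  then have "missing_relatoms L Rl' < missing_relatoms L Rl"
    unfolding missing_relatoms_def using assms(1) by (intro psubset_card_mono) auto
  then show ?thesis
    by (simp add: sequent_less_def)
qed

lemma premiss_within:
  assumes "rule_inst r ps s" "p \<in> set ps" "sequent_within L Sb s"
  shows "sequent_within L Sb p"
  using assms by cases auto

lemma premiss_less:
  assumes "finite L" "finite Sb" "\<forall>F \<in> Sb. size F < N"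
    and "rule_inst r ps s" "addresses_unsat r s" "sequent_within L Sb s" "p \<in> set ps"
  shows "(p, s) \<in> sequent_less L Sb N"
  using assms(4)
proof cases
  case (impL x A B Rl G D)
  have "(x, Imp A B, Imp_Left) \<in> unmet_demands L Sb (add_mset (x, Imp A B) G) D"
    using assms(5,6) impL by (auto simp: unmet_demands_def)
  then show ?thesis
    using assms(7) impL
    by (auto intro!: sequent_less_by_demands unmet_demands_decrease[OF assms(1-3)])
next
  case (impR x A B Rl G D)
  have "(x, Imp A B, Imp_Right) \<in> unmet_demands L Sb G (add_mset (x, Imp A B) D)"
    using assms(5,6) impR by (auto simp: unmet_demands_def)
  then show ?thesis
    using assms(7) impR
    by (auto intro!: sequent_less_by_demands unmet_demands_decrease[OF assms(1-3)])
next
  case (boxL x y A Rl G D)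
  have "(y, A, In_Antecedent) \<in> unmet_demands L Sb (add_mset (x, Box A) G) D"
    using assms(5,6) boxL subformulas_refl by (auto simp: unmet_demands_def)
  then show ?thesis
    using assms(7) boxL
    by (auto intro!: sequent_less_by_demands unmet_demands_decrease[OF assms(1-3)])
next
  case (triL x y A Rl G D)
  have "(y, A, In_Antecedent) \<in> unmet_demands L Sb (add_mset (x, Tri A) G) D"
    using assms(5,6) triL subformulas_refl by (auto simp: unmet_demands_def)
  then show ?thesis
    using assms(7) triL
    by (auto intro!: sequent_less_by_demands unmet_demands_decrease[OF assms(1-3)])
next
  case (trans c d x y z Rl G D)
  then have p: "p = (add_mset (c, x, y) (add_mset (d, y, z) (add_mset (d, x, z) Rl)), G, D)"
    using assms(7) by simp
  have "(d, x, z) \<notin># add_mset (c, x, y) (add_mset (d, y, z) Rl)" "x \<in> L" "z \<in> L"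
    using assms(5,6) trans by auto
  then show ?thesis
    unfolding p trans(3) using assms(1)
    by (intro sequent_less_by_relatoms[where k = d and x = x and z = z]) auto
qed

definition expandable :: "sequent \<Rightarrow> bool" where
  "expandable s \<longleftrightarrow> (\<exists>r ps. rule_inst r ps s \<and> addresses_unsat r s)"

lemma expandable_trans:
  assumes "(c, x, y) \<in># Rl" "(d, y, z) \<in># Rl" "(d, x, z) \<notin># Rl"
  shows "expandable (Rl, G, D)"
proof -
  obtain R1 where R1: "Rl = add_mset (c, x, y) R1"
    using assms(1) by (metis multi_member_split)
  with assms(2,3) have "(d, y, z) \<in># R1"
    by auto
  then obtain R0 where "R1 = add_mset (d, y, z) R0"
    by (metis multi_member_split)
  with R1 assms(3) show ?thesis
    unfolding expandable_def using rule_inst.trans[of c d x y z R0 G D] by fastforce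
qed

lemma expandable_impL:
  assumes "(x, Imp A B) \<in># G" "(x, A) \<notin># D" "(x, B) \<notin># G"
  shows "expandable (Rl, G, D)"
proof -
  obtain G0 where "G = add_mset (x, Imp A B) G0"
    using assms(1) by (metis multi_member_split)
  with assms(2,3) show ?thesis
    unfolding expandable_def using rule_inst.impL[of x A B Rl G0 D] by fastforce
qed

lemma expandable_impR:
  assumes "(x, Imp A B) \<in># D" "\<not> ((x, A) \<in># G \<and> (x, B) \<in># D)"
  shows "expandable (Rl, G, D)"
proof -
  obtain D0 where "D = add_mset (x, Imp A B) D0"
    using assms(1) by (metis multi_member_split)
  with assms(2) show ?thesis
    unfolding expandable_def using rule_inst.impR[of x A B Rl G D0] by fastforce
qed

lemma expandable_boxL:
  assumes "(x, Box A) \<in># G" "(RR, x, y) \<in># Rl" "(y, A) \<notin># G"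
  shows "expandable (Rl, G, D)"
proof -
  obtain G0 R0 where "G = add_mset (x, Box A) G0" "Rl = add_mset (RR, x, y) R0"
    using assms(1,2) by (metis multi_member_split)
  with assms(3) show ?thesis
    unfolding expandable_def using rule_inst.boxL[of x y A R0 G0 D] by fastforce
qed

lemma expandable_triL:
  assumes "(x, Tri A) \<in># G" "(SS, x, y) \<in># Rl" "(y, A) \<notin># G"
  shows "expandable (Rl, G, D)"
proof -
  obtain G0 R0 where "G = add_mset (x, Tri A) G0" "Rl = add_mset (SS, x, y) R0"
    using assms(1,2) by (metis multi_member_split)
  with assms(3) show ?thesis
    unfolding expandable_def using rule_inst.triL[of x y A R0 G0 D] by fastforce
qed

lemma expandable_if_not_saturated:
  assumes "\<not> saturated s"
  shows "expandable s"
proof -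
  obtain Rl G D where s: "s = (Rl, G, D)"
    by (cases s)
  show ?thesis
  proof (cases "trans_closed Rl")
    case False
    then show ?thesis
      unfolding s trans_closed_def by (blast intro: expandable_trans)
  next
    case True
    with assms obtain x F where "(x, F) \<in># G + D" "\<not> lf_saturated s (x, F)"
      unfolding saturated_def s by auto
    then show ?thesis
      unfolding s
      by (cases F) (auto intro: expandable_impL expandable_impR expandable_boxL expandable_triL)
  qed
qed

lemma open_leaves_expand: "open_leaves (Node s r (map Leaf ps)) = ps"
  by (induction ps) auto

lemma sat_step_open_leaves:
  assumes "sat_step t t'"
  shows "\<exists>s r ps I. mset (open_leaves t) = add_mset s I \<and> mset (open_leaves t') = I + mset ps \<and>
           rule_inst r ps s \<and> addresses_unsat r s"
  using assms
proof (induction rule: sat_step.induct)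
  case (expand s r ps)
  then show ?case
    using open_leaves_expand[of s r ps]
    by (intro exI[of _ s] exI[of _ r] exI[of _ ps] exI[of _ "{#}"]) simp
next
  case (inside t t' s r ts1 ts2)
  then obtain s0 r0 ps I where
    "mset (open_leaves t) = add_mset s0 I" "mset (open_leaves t') = I + mset ps"
    "rule_inst r0 ps s0" "addresses_unsat r0 s0"
    by blast
  then show ?case
    by (intro exI[of _ s0] exI[of _ r0] exI[of _ ps]
          exI[of _ "I + mset (concat (map open_leaves ts1)) + mset (concat (map open_leaves ts2))"])
      (simp add: ac_simps)
qed

lemma sat_step_root: "sat_step t t' \<Longrightarrow> root t' = root t"
  by (induction rule: sat_step.induct) auto

lemma sat_step_derivation: "sat_step t t' \<Longrightarrow> is_derivation t \<Longrightarrow> is_derivation t'"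
  by (induction rule: sat_step.induct) (auto simp: comp_def sat_step_root)

lemma sat_step_from_unsaturated_leaf:
  "s \<in> set (open_leaves t) \<Longrightarrow> \<not> saturated s \<Longrightarrow> \<exists>t'. sat_step t t'"
proof (induction t)
  case (Leaf s')
  then show ?case
    using expandable_if_not_saturated sat_step.expand unfolding expandable_def by fastforce
next
  case (Node s' r ts)
  then obtain t where t: "t \<in> set ts" "s \<in> set (open_leaves t)"
    by auto
  then obtain ts1 ts2 where "ts = ts1 @ t # ts2"
    by (meson split_list)
  with Node t show ?case
    using sat_step.inside by blast
qed

lemma sat_step_within:
  assumes "sat_step t t'" "\<forall>s \<in> set (open_leaves t). sequent_within L Sb s"
  shows "\<forall>s \<in> set (open_leaves t'). sequent_within L Sb s"
proof -
  obtain s r ps I where "mset (open_leaves t) = add_mset s I" "mset (open_leaves t') = I + mset ps"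
    "rule_inst r ps s"
    using sat_step_open_leaves[OF assms(1)] by blast
  then show ?thesis
    using assms(2) premiss_within
    by (metis set_mset_mset set_mset_add_mset_insert set_mset_union Un_iff insert_iff)
qed

lemma sat_step_less:
  assumes "finite L" "finite Sb" "\<forall>F \<in> Sb. size F < N"
    and "sat_step t t'" "\<forall>s \<in> set (open_leaves t). sequent_within L Sb s"
  shows "(mset (open_leaves t'), mset (open_leaves t)) \<in> mult (sequent_less L Sb N)"
proof -
  obtain s r ps I where leaves: "mset (open_leaves t) = I + {#s#}" "mset (open_leaves t') = I + mset ps"
    and rule: "rule_inst r ps s" "addresses_unsat r s"
    using sat_step_open_leaves[OF assms(4)] by fastforce
  have "s \<in> set (open_leaves t)"
    using arg_cong[OF leaves(1), of set_mset] by simp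
  then have "sequent_within L Sb s"
    using assms(5) by blast
  then have "\<forall>p \<in># mset ps. \<exists>s' \<in># {#s#}. (p, s') \<in> sequent_less L Sb N"
    using premiss_less[OF assms(1-3) rule] by simp
  then show ?thesis
    unfolding leaves by (rule one_step_implies_mult[rotated]) simp
qed

lemma sat_phase_within:
  assumes "sat_step\<^sup>*\<^sup>* (Leaf S) t"
  shows "\<forall>s \<in> set (open_leaves t). sequent_within (sequent_labels S) (sequent_subformulas S) s"
  using assms
  by induction (auto simp: sequent_within_labels_subformulas dest: sat_step_within)

lemma sat_phase_terminates: "\<nexists>f. f 0 = Leaf S \<and> (\<forall>n. sat_step (f n) (f (Suc n)))"
proof
  assume "\<exists>f. f 0 = Leaf S \<and> (\<forall>n. sat_step (f n) (f (Suc n)))"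
  then obtain f where f0: "f 0 = Leaf S" and steps: "\<And>n. sat_step (f n) (f (Suc n))"
    by blast
  let ?L = "sequent_labels S" and ?Sb = "sequent_subformulas S"
  obtain N where N: "\<forall>F \<in> ?Sb. size F < N"
    using finite_sequent_subformulas[of S] finite_nat_set_iff_bounded[of "size ` ?Sb"] by auto
  have "sat_step\<^sup>*\<^sup>* (Leaf S) (f n)" for n
    by (induction n) (auto simp: f0 intro: rtranclp.rtrancl_into_rtrancl steps)
  then have "(mset (open_leaves (f (Suc n))), mset (open_leaves (f n))) \<in> mult (sequent_less ?L ?Sb N)" for n
    using sat_step_less[OF finite_sequent_labels finite_sequent_subformulas N steps] sat_phase_within
    by blast
  then have "\<exists>g. \<forall>n. (g (Suc n), g n) \<in> mult (sequent_less ?L ?Sb N)"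
    by (intro exI[of _ "\<lambda>n. mset (open_leaves (f n))"]) blast
  then show False
    using wf_mult[OF wf_sequent_less] unfolding wf_iff_no_infinite_down_chain by blast
qed

lemma sat_phase_result:
  assumes "sat_step\<^sup>*\<^sup>* (Leaf S) t" "\<nexists>t'. sat_step t t'"
  shows "root t = S \<and> is_derivation t \<and> (\<forall>s \<in> set (open_leaves t). saturated s)"
proof -
  have "root t = S \<and> is_derivation t"
    using assms(1) by induction (auto simp: sat_step_root sat_step_derivation)
  then show ?thesis
    using assms(2) sat_step_from_unsaturated_leaf by blast
qed

theorem lemma2:
  fixes S :: sequent
  shows "\<not> (\<exists>f. f 0 = Leaf S \<and> (\<forall>n. sat_step (f n) (f (Suc n)))) \<and>
         (\<forall>t. sat_step\<^sup>*\<^sup>* (Leaf S) t \<and> \<not> (\<exists>t'. sat_step t t') \<longrightarrow>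
           root t = S \<and> is_derivation t \<and> (\<forall>s \<in> set (open_leaves t). saturated s))"
  using sat_phase_terminates sat_phase_result by blast

end
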